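(* Let $N\in\mathbb{N}$ and let $u$ and $v$ be nontrivial, coprime divisors of $N$. Let $b\in\mathbb{Z}$ and $f\in\mathbb{Z}[X]$ with $f(b)=N$ such that (1) $\gcd(\mathrm{lc}(f),N)=1$, where $\mathrm{lc}(f)$ is the leading coefficient of $f$, and (2) $d:=\deg f$ is smaller than the largest prime factor of $v$. Then there exists $x\in\mathbb{Z}$ with $u\mid f(x)$ and $v\nmid f(x)$. *)

theory Defs
  imports "HOL-Computational_Algebra.Computational_Algebra"
begin

definition nontrivial_divisor :: "nat \<Rightarrow> nat \<Rightarrow> bool" where
  "nontrivial_divisor d N \<longleftrightarrow> d dvd N \<and> d \<noteq> 1 \<and> d \<noteq> N"

end

theory Submission imports Defs begin

text \<open>
  Let \<open>p\<close> be the largest prime factor of \<open>v\<close> and substitute \<open>x = b + u t\<close>.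
  Then \<open>f(x) \<equiv> f(b) = N \<equiv> 0 (mod u)\<close> for every \<open>t\<close>, and \<open>g(t) = f(b + u t)\<close> has
  degree \<open>d < p\<close> and leading coefficient \<open>lc(f) u\<^sup>d\<close>, which is prime to \<open>p\<close> because
  \<open>p\<close> divides \<open>N\<close> but not \<open>u\<close>. Such a polynomial has at most \<open>d\<close> roots modulo \<open>p\<close>,
  so some \<open>t\<close> gives \<open>p \<nmid> f(x)\<close>, whence \<open>v \<nmid> f(x)\<close>.
\<close>

lemma poly_eq_synthetic_div:
  fixes f :: "'a::comm_ring_1 poly"
  shows "poly f x = (x - c) * poly (synthetic_div f c) x + poly f c"
  by (subst (1) synthetic_div_correct'[symmetric, of f c]) (simp add: algebra_simps)

lemma sub_dvd_poly_diff:
  fixes f :: "'a::comm_ring_1 poly"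
  shows "x - c dvd poly f x - poly f c"
  by (simp add: poly_eq_synthetic_div[of f x c])

lemma lead_coeff_synthetic_div:
  fixes f :: "'a::idom poly"
  assumes "degree f > 0"
  shows "lead_coeff (synthetic_div f c) = lead_coeff f"
proof -
  have "synthetic_div f c \<noteq> 0"
    using assms by (simp add: synthetic_div_eq_0_iff)
  then have "degree ([:-c, 1:] * synthetic_div f c) > 0"
    by (simp add: degree_mult_eq del: mult_pCons_left)
  have "lead_coeff f = lead_coeff ([:poly f c:] + [:-c, 1:] * synthetic_div f c)"
    by (metis add.commute synthetic_div_correct')
  also have "\<dots> = lead_coeff ([:-c, 1:] * synthetic_div f c)"
    using \<open>degree ([:-c, 1:] * synthetic_div f c) > 0\<close> by (intro lead_coeff_add_le) simp
  finally show ?thesis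
    by (simp add: lead_coeff_mult del: mult_pCons_left)
qed

lemma card_roots_mod_prime_le_degree:
  fixes p :: int and g :: "int poly"
  assumes "prime p" and "\<not> p dvd lead_coeff g"
  shows "card {t \<in> {0..<p}. p dvd poly g t} \<le> degree g"
  using assms(2)
proof (induction "degree g" arbitrary: g)
  case 0
  then obtain c where "g = [:c:]"
    by (metis degree_eq_zeroE)
  then have "{t \<in> {0..<p}. p dvd poly g t} = {}"
    using 0 by auto
  then show ?case by (metis card.empty le0)
next
  case (Suc n)
  show ?case
  proof (cases "\<exists>a \<in> {0..<p}. p dvd poly g a")
    case False
    then have "{t \<in> {0..<p}. p dvd poly g t} = {}" by auto
    then show ?thesis by (metis card.empty le0)
  next
    case True
    then obtain a where a: "a \<in> {0..<p}" "p dvd poly g a" by blast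
    define q where "q = synthetic_div g a"
    have "degree q = n" and "lead_coeff q = lead_coeff g"
      using Suc.hyps lead_coeff_synthetic_div[of g a] by (simp_all add: q_def degree_synthetic_div)
    then have card_q: "card {t \<in> {0..<p}. p dvd poly q t} \<le> n"
      using Suc by metis
    have "{t \<in> {0..<p}. p dvd poly g t} \<subseteq> insert a {t \<in> {0..<p}. p dvd poly q t}"
    proof
      fix t assume t: "t \<in> {t \<in> {0..<p}. p dvd poly g t}"
      then have "p dvd (t - a) * poly q t"
        using a poly_eq_synthetic_div[of g t a] by (simp add: q_def dvd_add_left_iff)
      then have "p dvd t - a \<or> p dvd poly q t"
        using assms(1) by (simp add: prime_dvd_mult_iff)
      moreover have "p dvd t - a \<Longrightarrow> t = a"
        using t a by (metis atLeastLessThan_iff mem_Collect_eq mod_eq_dvd_iff mod_pos_pos_trivial)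
      ultimately show "t \<in> insert a {t \<in> {0..<p}. p dvd poly q t}"
        using t by auto
    qed
    then have "card {t \<in> {0..<p}. p dvd poly g t} \<le> card (insert a {t \<in> {0..<p}. p dvd poly q t})"
      by (intro card_mono) (auto intro: finite_subset[of _ "{0..<p}"])
    also have "\<dots> \<le> Suc n"
      using card_q by (intro card_insert_le_m1) simp_all
    finally show ?thesis
      using Suc.hyps by simp
  qed
qed

lemma exists_nonroot_mod_prime:
  fixes p :: int and g :: "int poly"
  assumes "prime p" and "\<not> p dvd lead_coeff g" and "degree g < p"
  shows "\<exists>t. \<not> p dvd poly g t"
proof (rule ccontr)
  assume "\<not> ?thesis"
  then have "{t \<in> {0..<p}. p dvd poly g t} = {0..<p}" by auto
  then show False
    using card_roots_mod_prime_le_degree[OF assms(1,2)] assms(3) by simp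
qed

lemma prime_factors_Max:
  fixes v :: nat
  assumes "v \<noteq> 0" and "v \<noteq> 1"
  shows "Max (prime_factors v) \<in> prime_factors v"
proof (rule Max_in)
  obtain r where "prime r" "r dvd v"
    using prime_factor_nat[OF assms(2)] by blast
  then have "r \<in> prime_factors v"
    using assms(1) by (simp add: in_prime_factors_iff)
  then show "prime_factors v \<noteq> {}" by blast
qed simp

lemma exists_shift_not_dvd_poly:
  fixes p c b :: int and f :: "int poly"
  assumes "prime p" and "\<not> p dvd lead_coeff f" and "\<not> p dvd c" and "degree f < p"
  shows "\<exists>t. \<not> p dvd poly f (b + c * t)"
proof -
  have "c \<noteq> 0"
    using assms(3) by auto
  then have "\<not> p dvd lead_coeff (f \<circ>\<^sub>p [:b, c:])"
    using assms(1-3) by (simp add: lead_coeff_comp prime_dvd_mult_iff) (metis prime_dvd_power)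
  moreover have "degree (f \<circ>\<^sub>p [:b, c:]) < p"
    using assms(4) \<open>c \<noteq> 0\<close> by (simp add: degree_pcompose)
  ultimately obtain t where "\<not> p dvd poly (f \<circ>\<^sub>p [:b, c:]) t"
    using exists_nonroot_mod_prime[OF assms(1)] by blast
  then show ?thesis
    by (auto simp: poly_pcompose mult.commute)
qed

theorem lemma2p5:
  fixes N u v :: nat and b :: int and f :: "int poly"
  assumes "nontrivial_divisor u N" and "nontrivial_divisor v N"
    and "coprime u v"
    and "poly f b = int N"
    and "gcd (lead_coeff f) (int N) = 1"
    and "degree f < Max (prime_factors v)"
  shows "\<exists>x::int. int u dvd poly f x \<and> \<not> int v dvd poly f x"
proof -
  have "u dvd N" "v dvd N" "v \<noteq> 0" "v \<noteq> 1"
    using assms(1,2) by (auto simp: nontrivial_divisor_def)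
  define p where "p = Max (prime_factors v)"
  then have "prime p" "p dvd v"
    using prime_factors_Max[OF \<open>v \<noteq> 0\<close> \<open>v \<noteq> 1\<close>] by auto
  have "\<not> int p dvd lead_coeff f"
    using assms(5) \<open>prime p\<close> \<open>p dvd v\<close> \<open>v dvd N\<close>
    by (metis dvd_trans gcd_greatest int_dvd_int_iff not_prime_unit of_nat_1 prime_nat_int_transfer)
  moreover have "\<not> int p dvd int u"
    using assms(3) \<open>prime p\<close> \<open>p dvd v\<close> by (metis coprime_common_divisor int_dvd_int_iff not_prime_unit)
  ultimately obtain t where t: "\<not> int p dvd poly f (b + int u * t)"
    using exists_shift_not_dvd_poly[of "int p" f "int u" b] \<open>prime p\<close> assms(6)
    by (auto simp: p_def prime_nat_int_transfer)
  have "int u dvd poly f (b + int u * t) - poly f b"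
    using sub_dvd_poly_diff[of "b + int u * t" b f] by (simp add: dvd_mult_left)
  then have "int u dvd poly f (b + int u * t)"
    using assms(4) \<open>u dvd N\<close> by (metis dvd_diff_commute dvd_add_right_iff diff_add_cancel int_dvd_int_iff)
  moreover have "\<not> int v dvd poly f (b + int u * t)"
    using t \<open>p dvd v\<close> by (meson dvd_trans int_dvd_int_iff)
  ultimately show ?thesis by blast
qed

end
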